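(* A left cancellative semigroup $S$ has either exactly one $\mathcal{R}$-class or infinitely many $\mathcal{R}$-classes.
   Context: $S$ is left cancellative if $ax=ay$ implies $x=y$ for all $a,x,y\in S$. $\mathcal{R}$ is Green's relation on $S$: $x\,\mathcal{R}\,y$ iff $xS^1=yS^1$. *)

theory Defs
  imports Main
begin

(* Semigroup S = the ambient type of class semigroup_mult. *)

definition left_cancellative :: "'a::semigroup_mult itself \<Rightarrow> bool" where
  "left_cancellative _ \<longleftrightarrow> (\<forall>a x y :: 'a. a * x = a * y \<longrightarrow> x = y)"

(* principal right ideal x S^1 = {x} \<union> x S *)
definition right_ideal1 :: "'a::semigroup_mult \<Rightarrow> 'a set" where
  "right_ideal1 x = insert x (range (\<lambda>s. x * s))"

definition greenR :: "('a::semigroup_mult \<times> 'a) set" where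
  "greenR = {(x, y). right_ideal1 x = right_ideal1 y}"

definition R_classes :: "'a::semigroup_mult itself \<Rightarrow> 'a set set" where
  "R_classes _ = (UNIV :: 'a set) // greenR"

end

theory Submission
  imports Defs
begin

(* R-classes correspond bijectively to principal right ideals
   xS^1, so it suffices to show: if S has only finitely many principal right ideals,
   they all coincide.  Fix a.  By left cancellativity, x |-> a x respects and reflects
   Green's relation R, so  x |-> axS^1  and  x |-> xS^1  have the same kernel and hence
   images of equal size.  The first image is contained in the finite set of all principal
   right ideals, so it is all of it.  Thus every principal right
   ideal has the form axS^1, which lies inside aS^1; so yS^1 is contained in aS^1 for
   all y, a, and by symmetry all principal right ideals are equal. *)

lemma right_ideal1_self: "x \<in> right_ideal1 x"
  by (simp add: right_ideal1_def)

lemma right_ideal1_mult: "x * s \<in> right_ideal1 x"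
  by (simp add: right_ideal1_def)

lemma right_ideal1_subset_iff: "right_ideal1 x \<subseteq> right_ideal1 y \<longleftrightarrow> x \<in> right_ideal1 y"
proof
  assume "x \<in> right_ideal1 y"
  then show "right_ideal1 x \<subseteq> right_ideal1 y"
    unfolding right_ideal1_def by (auto simp: mult.assoc)
qed (use right_ideal1_self in blast)

lemma left_mult_mem_right_ideal1_iff:
  assumes "left_cancellative TYPE('a::semigroup_mult)"
  shows "(a::'a) * x \<in> right_ideal1 (a * y) \<longleftrightarrow> x \<in> right_ideal1 y"
proof
  assume "a * x \<in> right_ideal1 (a * y)"
  then have "a * x = a * y \<or> (\<exists>s. a * x = a * (y * s))"
    by (auto simp: right_ideal1_def mult.assoc)
  then show "x \<in> right_ideal1 y"
    using assms unfolding left_cancellative_def right_ideal1_def by blast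
qed (auto simp: right_ideal1_def mult.assoc)

lemma left_mult_right_ideal1_eq_iff:
  assumes "left_cancellative TYPE('a::semigroup_mult)"
  shows "right_ideal1 ((a::'a) * x) = right_ideal1 (a * y) \<longleftrightarrow> right_ideal1 x = right_ideal1 y"
  using left_mult_mem_right_ideal1_iff[OF assms] right_ideal1_subset_iff
  by (metis subset_antisym order_refl)

lemma card_range_eq_if_same_kernel:
  assumes kernel: "\<And>x y. f x = f y \<longleftrightarrow> g x = g y"
  shows "card (range f) = card (range g)"
proof -
  have "bij_betw (\<lambda>u. f (inv g u)) (range g) (range f)"
  proof (rule bij_betw_imageI)
    have "f (inv g (g x)) = f x" for x
      using kernel f_inv_into_f[of "g x" g UNIV] by blast
    then show "(\<lambda>u. f (inv g u)) ` range g = range f"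
      by (auto simp: image_image)
    show "inj_on (\<lambda>u. f (inv g u)) (range g)"
      proof (rule inj_onI)
      fix u v assume "u \<in> range g" "v \<in> range g" "f (inv g u) = f (inv g v)"
      then show "u = v" using kernel f_inv_into_f by metis
    qed
  qed
  then show ?thesis
    by (simp add: bij_betw_same_card)
qed

lemma R_classes_bij_principal_right_ideals:
  "bij_betw (\<lambda>J. {y. right_ideal1 y = J}) (range right_ideal1) (R_classes TYPE('a::semigroup_mult))"
proof (rule bij_betw_imageI)
  show "inj_on (\<lambda>J. {y. right_ideal1 y = J}) (range (right_ideal1 :: 'a \<Rightarrow> 'a set))"
  proof (rule inj_onI)
    fix J K :: "'a set"
    assume "J \<in> range right_ideal1" and classes: "{y. right_ideal1 y = J} = {y. right_ideal1 y = K}"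
    then obtain x where "right_ideal1 x = J" by blast
    moreover from this have "right_ideal1 x = K"
      using classes by (metis (mono_tags) mem_Collect_eq)
    ultimately show "J = K" by simp
  qed
  show "(\<lambda>J. {y. right_ideal1 y = J}) ` range right_ideal1 = R_classes TYPE('a)"
    unfolding R_classes_def quotient_def greenR_def by auto
qed

lemma finite_principal_right_ideals_equal:
  assumes lc: "left_cancellative TYPE('a::semigroup_mult)"
    and fin: "finite (range (right_ideal1 :: 'a \<Rightarrow> 'a set))"
  shows "right_ideal1 (y::'a) \<subseteq> right_ideal1 a"
proof -
  let ?I = "range (right_ideal1 :: 'a \<Rightarrow> 'a set)"
  let ?aI = "range (\<lambda>x. right_ideal1 (a * x))"
  have "?aI \<subseteq> ?I" by blast
  moreover have "card ?aI = card ?I"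
    by (rule card_range_eq_if_same_kernel) (rule left_mult_right_ideal1_eq_iff[OF lc])
  ultimately have "?aI = ?I"
    by (rule card_subset_eq[OF fin])
  then have "right_ideal1 y \<in> ?aI"
    by (simp only:) (rule rangeI)
  then obtain x where "right_ideal1 y = right_ideal1 (a * x)"
    by blast
  also have "\<dots> \<subseteq> right_ideal1 a"
    by (simp add: right_ideal1_subset_iff right_ideal1_mult)
  finally show ?thesis .
qed

theorem mainTheorem8:
  assumes "left_cancellative TYPE('a::semigroup_mult)"
  shows "card (R_classes TYPE('a)) = 1 \<or> infinite (R_classes TYPE('a))"
proof (rule disjCI)
  let ?I = "range (right_ideal1 :: 'a \<Rightarrow> 'a set)"
  have bij: "bij_betw (\<lambda>J. {y. right_ideal1 y = J}) ?I (R_classes TYPE('a))"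
    by (rule R_classes_bij_principal_right_ideals)
  assume "\<not> infinite (R_classes TYPE('a))"
  then have "finite ?I"
    using bij_betw_finite[OF bij] by simp
  then have "right_ideal1 y = right_ideal1 a" for y a :: 'a
    using finite_principal_right_ideals_equal[OF assms] by (meson subset_antisym)
  then have "?I = {right_ideal1 undefined}"
    by blast
  then have "card ?I = 1"
    by simp
  then show "card (R_classes TYPE('a)) = 1"
    using bij_betw_same_card[OF bij] by simp
qed

end
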